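(* There exist a constant $c>0$ and, for infinitely many $T$, forecasts $\mathbf p^{(T)}\in[0,1]^T$ and outcomes $\mathbf x^{(T)}\in\{0,1\}^T$ such that $\mathrm{Cal}(\mathbf p^{(T)},\mathbf x^{(T)})\ge cT$, but for every bounded proper binary scoring rule $\ell$, $\mathrm{Reg}_\ell(\mathbf p^{(T)},\mathbf x^{(T)})=o(T)$ as $T\to\infty$.
   Context: A binary scoring rule is $\ell:[0,1]\times\{0,1\}\to\mathbb R$; with $\ell(p;q)=(1-q)\ell(p,0)+q\ell(p,1)$ it is proper if $\ell(p;p)\le\ell(p';p)$ for all $p,p'\in[0,1]$, and bounded if its values lie in $[-1,1]$. For $\mathbf x\in\{0,1\}^T$, $\mathbf p\in[0,1]^T$ and $\beta=\frac1T\sum_tx_t$, $\mathrm{Reg}_\ell(\mathbf p,\mathbf x)=\sum_t\ell(p_t,x_t)-\sum_t\ell(\beta,x_t)$. With $n_p=|\{t:p_t=p\}|$ and $m_p=|\{t:p_t=p,\ x_t=1\}|$, the calibration error is $\mathrm{Cal}(\mathbf p,\mathbf x)=\sum_p|p\,n_p-m_p|$ (sum over $p$ with $n_p>0$). *)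

theory Defs
  imports Complex_Main
begin

text \<open>A binary scoring rule is a function l :: real => nat => real; only its values on
  [0,1] x {0,1} matter. Outcomes are naturals in {0,1}; sequences of length T are
  functions nat => _ restricted to indices t < T.\<close>

definition exp_score :: "(real \<Rightarrow> nat \<Rightarrow> real) \<Rightarrow> real \<Rightarrow> real \<Rightarrow> real" where
  "exp_score l p q = (1 - q) * l p 0 + q * l p 1"

definition proper_rule :: "(real \<Rightarrow> nat \<Rightarrow> real) \<Rightarrow> bool" where
  "proper_rule l \<longleftrightarrow> (\<forall>p\<in>{0..1}. \<forall>p'\<in>{0..1}. exp_score l p p \<le> exp_score l p' p)"

definition bounded_rule :: "(real \<Rightarrow> nat \<Rightarrow> real) \<Rightarrow> bool" where
  "bounded_rule l \<longleftrightarrow> (\<forall>p\<in>{0..1}. \<forall>y\<in>{0::nat,1}. l p y \<in> {-1..1})"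

definition base_rate :: "nat \<Rightarrow> (nat \<Rightarrow> nat) \<Rightarrow> real" where
  "base_rate T x = (\<Sum>t<T. real (x t)) / real T"

definition Reg :: "(real \<Rightarrow> nat \<Rightarrow> real) \<Rightarrow> nat \<Rightarrow> (nat \<Rightarrow> real) \<Rightarrow> (nat \<Rightarrow> nat) \<Rightarrow> real" where
  "Reg l T p x = (\<Sum>t<T. l (p t) (x t)) - (\<Sum>t<T. l (base_rate T x) (x t))"

definition Cal :: "nat \<Rightarrow> (nat \<Rightarrow> real) \<Rightarrow> (nat \<Rightarrow> nat) \<Rightarrow> real" where
  "Cal T p x = (\<Sum>q\<in>p ` {..<T}.
      \<bar>q * real (card {t\<in>{..<T}. p t = q}) - real (card {t\<in>{..<T}. p t = q \<and> x t = 1})\<bar>)"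

end

theory Submission
  imports Defs
begin

text \<open>Alternate the outcomes 1, 0, 1, 0, ... and forecast p(t) = 1/2 + t/T^2. The forecasts
  are pairwise distinct and stay in [1/2, 3/4], so every forecast value is miscalibrated by at
  least 1/4 and the calibration error is at least T/4. For the regret, pair the rounds 2k and
  2k+1: their loss is l(p(2k), 1) + l(p(2k), 0) plus the increment l(p(2k+1), 0) - l(p(2k), 0).
  Properness makes l(-, 0) nondecreasing, so the increments telescope to at most 2, and it makes
  u \<mapsto> l(u, 0) + l(u, 1) minimal at 1/2 and, for bounded l, Lipschitz there with constant 8.
  As all forecasts are within 1/T of the base rate 1/2, the regret stays below 6.\<close>

lemma proper_rule_monotone:
  fixes l :: "real \<Rightarrow> nat \<Rightarrow> real"
  assumes "proper_rule l" and "u \<in> {0..1}" and "v \<in> {0..1}" and "u \<le> v"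
  shows "l u 0 \<le> l v 0" and "l v 1 \<le> l u 1"
proof -
  define d0 d1 where "d0 = l v 0 - l u 0" and "d1 = l v 1 - l u 1"
  have "exp_score l u u \<le> exp_score l v u" and "exp_score l v v \<le> exp_score l u v"
    using assms unfolding proper_rule_def by blast+
  then have at_u: "0 \<le> (1 - u) * d0 + u * d1" and at_v: "(1 - v) * d0 + v * d1 \<le> 0"
    unfolding exp_score_def d0_def d1_def by (simp_all add: algebra_simps)
  have "0 \<le> d0 \<and> d1 \<le> 0"
  proof (cases "u = v")
    case False
    with \<open>u \<le> v\<close> have "u < v" by simp
    have "0 \<le> v * ((1 - u) * d0 + u * d1)" and "u * ((1 - v) * d0 + v * d1) \<le> 0"
      using at_u at_v assms(2,3) by (simp_all add: mult_nonneg_nonpos)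
    then have "0 \<le> v * ((1 - u) * d0 + u * d1) - u * ((1 - v) * d0 + v * d1)"
      by linarith
    then have "0 \<le> (v - u) * d0" by (simp add: algebra_simps)
    moreover have "0 \<le> (1 - v) * ((1 - u) * d0 + u * d1)" and "(1 - u) * ((1 - v) * d0 + v * d1) \<le> 0"
      using at_u at_v assms(2,3) by (simp_all add: mult_nonneg_nonpos)
    then have "0 \<le> (1 - v) * ((1 - u) * d0 + u * d1) - (1 - u) * ((1 - v) * d0 + v * d1)"
      by linarith
    then have "0 \<le> (u - v) * d1" by (simp add: algebra_simps)
    ultimately show ?thesis
      using \<open>u < v\<close> by (simp add: zero_le_mult_iff)
  qed (simp add: d0_def d1_def)
  then show "l u 0 \<le> l v 0" and "l v 1 \<le> l u 1"
    unfolding d0_def d1_def by simp_all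
qed

lemma bounded_ruleD:
  assumes "bounded_rule l" and "p \<in> {0..1}"
  shows "\<bar>l p 0\<bar> \<le> 1" and "\<bar>l p 1\<bar> \<le> 1"
  using assms unfolding bounded_rule_def by (simp_all add: abs_le_iff)

lemma proper_bounded_exp_score_le:
  fixes l :: "real \<Rightarrow> nat \<Rightarrow> real"
  assumes "proper_rule l" and "bounded_rule l" and "u \<in> {0..1}" and "q \<in> {0..1}"
  shows "exp_score l u q \<le> exp_score l q q + 4 * \<bar>u - q\<bar>"
proof -
  have affine: "exp_score l w q = exp_score l w u + (q - u) * (l w 1 - l w 0)" for w
    unfolding exp_score_def by (simp add: algebra_simps)
  have "exp_score l u u \<le> exp_score l q u"
    using assms unfolding proper_rule_def by blast
  then have "exp_score l u q - exp_score l q q \<le> (q - u) * ((l u 1 - l u 0) - (l q 1 - l q 0))"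
    using affine[of u] affine[of q] by (simp add: algebra_simps)
  also have "\<dots> \<le> \<bar>q - u\<bar> * \<bar>(l u 1 - l u 0) - (l q 1 - l q 0)\<bar>"
    by (metis abs_ge_self abs_mult)
  also have "\<dots> \<le> \<bar>u - q\<bar> * 4"
    using bounded_ruleD[OF assms(2,3)] bounded_ruleD[OF assms(2,4)]
    by (intro mult_mono) auto
  finally show ?thesis by simp
qed

lemma proper_bounded_score_sum_near_half:
  fixes l :: "real \<Rightarrow> nat \<Rightarrow> real"
  assumes "proper_rule l" and "bounded_rule l" and "u \<in> {0..1}"
  shows "l (1/2) 0 + l (1/2) 1 \<le> l u 0 + l u 1"
    and "l u 0 + l u 1 \<le> l (1/2) 0 + l (1/2) 1 + 8 * \<bar>u - 1/2\<bar>"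
proof -
  have sum_eq: "l w 0 + l w 1 = 2 * exp_score l w (1/2)" for w
    unfolding exp_score_def by simp
  have "exp_score l (1/2) (1/2) \<le> exp_score l u (1/2)"
    using assms unfolding proper_rule_def by simp
  then show "l (1/2) 0 + l (1/2) 1 \<le> l u 0 + l u 1"
    unfolding sum_eq by simp
  have "exp_score l u (1/2) \<le> exp_score l (1/2) (1/2) + 4 * \<bar>u - 1/2\<bar>"
    using proper_bounded_exp_score_le[OF assms] by simp
  then show "l u 0 + l u 1 \<le> l (1/2) 0 + l (1/2) 1 + 8 * \<bar>u - 1/2\<bar>"
    unfolding sum_eq by simp
qed

lemma sum_odd_increments_bounds:
  fixes f :: "nat \<Rightarrow> real"
  assumes "mono_on {..2*m} f"
  shows "0 \<le> (\<Sum>k<m. f (2*k+1) - f (2*k))"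
    and "(\<Sum>k<m. f (2*k+1) - f (2*k)) \<le> f (2*m) - f 0"
proof -
  show "0 \<le> (\<Sum>k<m. f (2*k+1) - f (2*k))"
    using assms by (intro sum_nonneg) (simp add: mono_onD)
  have "(\<Sum>k<m. f (2*k+1) - f (2*k)) \<le> (\<Sum>k<m. f (2*Suc k) - f (2*k))"
    using assms by (intro sum_mono) (simp add: mono_onD)
  also have "\<dots> = f (2*m) - f 0"
    using sum_lessThan_telescope[of "\<lambda>k. f (2*k)"] by simp
  finally show "(\<Sum>k<m. f (2*k+1) - f (2*k)) \<le> f (2*m) - f 0" .
qed

definition alternating :: "nat \<Rightarrow> nat" where
  "alternating t = (if even t then 1 else 0)"

lemma sum_alternating:
  fixes g :: "nat \<Rightarrow> nat \<Rightarrow> 'a::comm_monoid_add"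
  shows "(\<Sum>t<2*m. g t (alternating t)) = (\<Sum>k<m. g (2*k) 1 + g (2*k+1) 0)"
  by (induction m) (simp_all add: alternating_def add.assoc)

lemma base_rate_alternating:
  assumes "m > 0"
  shows "base_rate (2*m) alternating = 1/2"
  using assms sum_alternating[of "\<lambda>_ y. real y" m] unfolding base_rate_def by simp

lemma Reg_alternating_bounds:
  fixes l :: "real \<Rightarrow> nat \<Rightarrow> real" and p :: "nat \<Rightarrow> real"
  assumes proper: "proper_rule l" and bounded: "bounded_rule l" and "m > 0"
    and mono: "mono_on {..2*m} p" and range: "\<And>t. t \<le> 2*m \<Longrightarrow> p t \<in> {0..1}"
    and near: "\<And>t. t \<le> 2*m \<Longrightarrow> \<bar>p t - 1/2\<bar> \<le> \<delta>"
  shows "0 \<le> Reg l (2*m) p alternating" and "Reg l (2*m) p alternating \<le> 2 + 8 * real m * \<delta>"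
proof -
  define G where "G u = l u 0 + l u 1" for u
  define excess where "excess = (\<Sum>k<m. G (p (2*k)) - G (1/2))"
  define increments where "increments = (\<Sum>k<m. l (p (2*k+1)) 0 - l (p (2*k)) 0)"
  have "excess + increments
      = (\<Sum>k<m. (l (p (2*k)) 1 + l (p (2*k+1)) 0) - (l (1/2) 1 + l (1/2) 0))"
    unfolding excess_def increments_def G_def sum.distrib[symmetric]
    by (intro sum.cong) auto
  also have "\<dots> = Reg l (2*m) p alternating"
    unfolding Reg_def base_rate_alternating[OF \<open>m > 0\<close>] sum_subtractf
    using sum_alternating[of "\<lambda>t y. l (p t) y"] sum_alternating[of "\<lambda>_ y. l (1/2) y"] by simp
  finally have Reg_eq: "Reg l (2*m) p alternating = excess + increments" ..
  have excess_bounds: "0 \<le> excess" "excess \<le> 8 * real m * \<delta>"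
  proof -
    show "0 \<le> excess"
      unfolding excess_def G_def
      using proper_bounded_score_sum_near_half(1)[OF proper bounded] range
      by (intro sum_nonneg) simp
    have "excess \<le> (\<Sum>k<m. 8 * \<delta>)"
      unfolding excess_def G_def
    proof (intro sum_mono)
      fix k assume "k \<in> {..<m}"
      then have "2*k \<le> 2*m" by simp
      with proper_bounded_score_sum_near_half(2)[OF proper bounded range] near
      show "l (p (2*k)) 0 + l (p (2*k)) 1 - (l (1/2) 0 + l (1/2) 1) \<le> 8 * \<delta>"
        by fastforce
    qed
    then show "excess \<le> 8 * real m * \<delta>" by simp
  qed
  have increments_bounds: "0 \<le> increments" "increments \<le> 2"
  proof -
    have "mono_on {..2*m} (\<lambda>t. l (p t) 0)"
      using proper_rule_monotone(1)[OF proper] range mono by (intro mono_onI) (simp add: mono_onD)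
    then have "0 \<le> increments" "increments \<le> l (p (2*m)) 0 - l (p 0) 0"
      unfolding increments_def by (rule sum_odd_increments_bounds)+
    moreover have "l (p (2*m)) 0 - l (p 0) 0 \<le> 2"
      using bounded_ruleD(1)[OF bounded range[of 0]] bounded_ruleD(1)[OF bounded range[of "2*m"]]
      by (simp add: abs_le_iff)
    ultimately show "0 \<le> increments" "increments \<le> 2"
      by simp_all
  qed
  show "0 \<le> Reg l (2*m) p alternating" and "Reg l (2*m) p alternating \<le> 2 + 8 * real m * \<delta>"
    using Reg_eq excess_bounds increments_bounds by simp_all
qed

lemma Cal_inj_on:
  assumes "inj_on p {..<T}"
  shows "Cal T p x = (\<Sum>t<T. \<bar>p t - (if x t = 1 then 1 else 0)\<bar>)"
proof -
  have "Cal T p x = (\<Sum>t<T. \<bar>p t * card {s\<in>{..<T}. p s = p t}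
                             - card {s\<in>{..<T}. p s = p t \<and> x s = 1}\<bar>)"
    unfolding Cal_def sum.reindex[OF assms] by simp
  also have "\<dots> = (\<Sum>t<T. \<bar>p t - (if x t = 1 then 1 else 0)\<bar>)"
  proof (intro sum.cong refl)
    fix t assume "t \<in> {..<T}"
    then have "{s\<in>{..<T}. p s = p t} = {t}"
      and "{s\<in>{..<T}. p s = p t \<and> x s = 1} = (if x t = 1 then {t} else {})"
      using assms by (auto simp: inj_on_def)
    then show "\<bar>p t * card {s\<in>{..<T}. p s = p t} - card {s\<in>{..<T}. p s = p t \<and> x s = 1}\<bar>
        = \<bar>p t - (if x t = 1 then 1 else 0)\<bar>"
      by simp
  qed
  finally show ?thesis .
qed

definition drift :: "nat \<Rightarrow> nat \<Rightarrow> real" where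
  "drift T t = 1/2 + real t / (real T)^2"

lemma strict_mono_drift: "T > 0 \<Longrightarrow> strict_mono (drift T)"
  unfolding strict_mono_def drift_def by (simp add: divide_strict_right_mono)

lemma drift_ge_half: "1/2 \<le> drift T t"
  unfolding drift_def by simp

lemma drift_le:
  assumes "t \<le> T"
  shows "drift T t \<le> 1/2 + 1 / real T"
proof -
  have "real t / (real T)^2 \<le> real T / (real T)^2"
    using assms by (simp add: divide_right_mono)
  also have "\<dots> = 1 / real T"
    by (simp add: power2_eq_square)
  finally show ?thesis
    unfolding drift_def by simp
qed

lemma drift_in_unit_interval:
  assumes "2 \<le> T" and "t \<le> T"
  shows "drift T t \<in> {0..1}"
proof -
  have "1 / real T \<le> 1/2"
    using assms(1) by (simp add: divide_simps)
  with drift_ge_half[of T t] drift_le[OF assms(2)] show ?thesis by simp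
qed

lemma Cal_drift_alternating:
  assumes "4 \<le> T"
  shows "real T / 4 \<le> Cal T (drift T) alternating"
proof -
  have "(\<Sum>t<T. 1/4) \<le> (\<Sum>t<T. \<bar>drift T t - (if alternating t = 1 then 1 else 0)\<bar>)"
  proof (intro sum_mono)
    fix t assume "t \<in> {..<T}"
    then have "drift T t \<le> 1/2 + 1 / real T"
      by (simp add: drift_le)
    moreover have "1 / real T \<le> 1/4"
      using assms by (simp add: divide_simps)
    ultimately have "1/2 \<le> drift T t" "drift T t \<le> 3/4"
      using drift_ge_half[of T t] by linarith+
    then show "1/4 \<le> \<bar>drift T t - (if alternating t = 1 then 1 else 0)\<bar>"
      by (simp add: alternating_def)
  qed
  also have "\<dots> = Cal T (drift T) alternating"
    using assms strict_mono_drift[of T] by (simp add: Cal_inj_on strict_mono_imp_inj_on)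
  finally show ?thesis by simp
qed

lemma Reg_drift_alternating:
  fixes l :: "real \<Rightarrow> nat \<Rightarrow> real"
  assumes "proper_rule l" and "bounded_rule l" and "m > 0"
  shows "\<bar>Reg l (2*m) (drift (2*m)) alternating\<bar> \<le> 6"
proof -
  have "mono_on {..2*m} (drift (2*m))"
    using strict_mono_drift[of "2*m"] \<open>m > 0\<close> by (simp add: mono_onI strict_mono_less_eq)
  moreover have "drift (2*m) t \<in> {0..1}" if "t \<le> 2*m" for t
    using drift_in_unit_interval[OF _ that] \<open>m > 0\<close> by simp
  moreover have "\<bar>drift (2*m) t - 1/2\<bar> \<le> 1 / real (2*m)" if "t \<le> 2*m" for t
    using drift_ge_half[of "2*m" t] drift_le[OF that] by simp
  ultimately have "0 \<le> Reg l (2*m) (drift (2*m)) alternating"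
    and "Reg l (2*m) (drift (2*m)) alternating \<le> 2 + 8 * real m * (1 / real (2*m))"
    using Reg_alternating_bounds[OF assms] by blast+
  then show ?thesis
    using \<open>m > 0\<close> by simp
qed

theorem lemma4p1:
  shows "\<exists>c::real. c > 0 \<and> (\<exists>S::nat set. infinite S \<and>
     (\<exists>(p::nat \<Rightarrow> nat \<Rightarrow> real) (x::nat \<Rightarrow> nat \<Rightarrow> nat).
        (\<forall>T\<in>S. (\<forall>t<T. p T t \<in> {0..1}) \<and> (\<forall>t<T. x T t \<in> {0,1}) \<and>
                 Cal T (p T) (x T) \<ge> c * real T) \<and>
        (\<forall>l. proper_rule l \<and> bounded_rule l \<longrightarrow>
           (\<forall>\<epsilon>>0. \<exists>N. \<forall>T\<in>S. T \<ge> N \<longrightarrow> \<bar>Reg l T (p T) (x T)\<bar> \<le> \<epsilon> * real T))))"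
proof -
  define S where "S = (\<lambda>m. 2*m) ` {2::nat..}"
  have "infinite S"
    unfolding S_def using infinite_Ici by (subst finite_image_iff) (auto simp: inj_on_def)
  moreover have "\<forall>T\<in>S. (\<forall>t<T. drift T t \<in> {0..1}) \<and> (\<forall>t<T. alternating t \<in> {0,1}) \<and>
                      Cal T (drift T) alternating \<ge> 1/4 * real T"
  proof
    fix T assume "T \<in> S"
    then have "4 \<le> T"
      unfolding S_def by auto
    then show "(\<forall>t<T. drift T t \<in> {0..1}) \<and> (\<forall>t<T. alternating t \<in> {0,1}) \<and>
               Cal T (drift T) alternating \<ge> 1/4 * real T"
      using Cal_drift_alternating[of T] drift_in_unit_interval[of T] by (simp add: alternating_def)
  qed
  moreover have "\<exists>N. \<forall>T\<in>S. T \<ge> N \<longrightarrow> \<bar>Reg l T (drift T) alternating\<bar> \<le> \<epsilon> * real T"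
    if "proper_rule l" "bounded_rule l" "\<epsilon> > 0" for l and \<epsilon> :: real
  proof (intro exI[of _ "nat \<lceil>6 / \<epsilon>\<rceil>"] ballI impI)
    fix T assume "T \<in> S" and "nat \<lceil>6 / \<epsilon>\<rceil> \<le> T"
    then obtain m where "m \<ge> 2" "T = 2*m"
      unfolding S_def by auto
    then have "\<bar>Reg l T (drift T) alternating\<bar> \<le> 6"
      using Reg_drift_alternating that by simp
    also have "6 \<le> \<epsilon> * real T"
      using \<open>nat \<lceil>6 / \<epsilon>\<rceil> \<le> T\<close> \<open>\<epsilon> > 0\<close> by (simp add: field_simps flip: of_nat_le_iff)
    finally show "\<bar>Reg l T (drift T) alternating\<bar> \<le> \<epsilon> * real T" .
  qed
  ultimately show ?thesis
    by (intro exI[of _ "1/4"] conjI exI[of _ S] exI[of _ drift] exI[of _ "\<lambda>_. alternating"]) auto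
qed

end
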